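(* Let $g(x,y)=\dfrac{\theta(2x)\theta(2y)}{h(x,y)}$. Then for all $x,y$ (where defined), \[ g(x,y)+g(x+\eta,y)+g(x+2\eta,y)=0 , \] and similarly $g(x,y)+g(x,y+\eta)+g(x,y+2\eta)=0$.
   Context: For $|q|<1$, $\theta_1(x;q)=2\sum_{n\ge0}(-1)^nq^{(n+1/2)^2}\sin((2n+1)x)$. Fix $p=e^{i\pi\tau}$ with $\operatorname{Im}\tau>0$, write $\theta(x)=\theta_1(x;p)$, set $\eta=\pi/3$, and $h(x,y)=\theta(\eta+x-y)\theta(\eta+x+y)\theta(\eta-x-y)\theta(\eta-x+y)$. *)

theory Defs
  imports "HOL-Analysis.Analysis"
begin

text \<open>Jacobi theta function theta_1(x; q) with nome q = exp(i pi tau), Im tau > 0.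
  The power q^((n+1/2)^2) is read as exp(i pi tau (n+1/2)^2).\<close>
definition theta1 :: "complex \<Rightarrow> complex \<Rightarrow> complex" where
  "theta1 \<tau> x = 2 * (\<Sum>n. (-1) ^ n * exp (\<i> * of_real pi * \<tau> * (of_nat n + 1/2)^2)
                         * sin ((2 * of_nat n + 1) * x))"

definition eta :: complex where
  "eta = of_real (pi / 3)"

definition hfun :: "complex \<Rightarrow> complex \<Rightarrow> complex \<Rightarrow> complex" where
  "hfun \<tau> x y = theta1 \<tau> (eta + x - y) * theta1 \<tau> (eta + x + y)
                * theta1 \<tau> (eta - x - y) * theta1 \<tau> (eta - x + y)"

definition gfun :: "complex \<Rightarrow> complex \<Rightarrow> complex \<Rightarrow> complex" where
  "gfun \<tau> x y = theta1 \<tau> (2 * x) * theta1 \<tau> (2 * y) / hfun \<tau> x y"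

end

theory Submission
  imports Defs
begin

(*
  The theorem is a consequence of a three-term addition formula for the Jacobi theta function
  theta = theta_1(.; p) at the third of a period eta = pi/3:

    (KEY)  theta(a+b) theta(a) theta(b) = theta(a+b-eta) theta(a+eta) theta(b+eta)
                                         + theta(a+b+eta) theta(a-eta) theta(b-eta).

  1. Writing sin via exponentials, theta(z) = -i * sum_{k in Z} chi(k) q^(k^2/4) e^(ikz), with chi the
     odd character mod 4.  This bilateral series converges absolutely (Gaussian decay in k), which
     gives oddness, antiperiodicity theta(z+pi) = -theta(z) and theta(pi-z) = theta(z).
  2. Each triple product in (KEY) is an absolutely convergent sum over Z^3.  Their difference is one
     sum whose terms carry the factor 1 - 2 cos(eta s), s = k2+k3-k1; it vanishes unless 3 | s, and
     on those terms an explicit involution of Z^3 reverses the sign, so the sum is zero.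
  3. Under x -> x+eta the four factors of h are permuted (up to sign) by the symmetries of step 1, so
     the three terms of the claimed identity have a common denominator, and the numerator vanishes
     by (KEY) with a = x+y, b = x-y.  The statement in y follows from the symmetry g(x,y) = g(y,x).
*)

section \<open>The bilateral series of theta_1\<close>

definition chi4 :: "int \<Rightarrow> complex" where
  "chi4 k = (if odd k then (if k mod 4 = 1 then 1 else -1) else 0)"

definition theta_bterm :: "complex \<Rightarrow> complex \<Rightarrow> int \<Rightarrow> complex" where
  "theta_bterm \<tau> z k = chi4 k * exp (\<i> * of_real pi * \<tau> * (of_int k)^2 / 4) * exp (\<i> * of_int k * z)"

definition theta_summand :: "complex \<Rightarrow> complex \<Rightarrow> nat \<Rightarrow> complex" where
  "theta_summand \<tau> z n = (-1) ^ n * exp (\<i> * of_real pi * \<tau> * (of_nat n + 1/2)^2) * sin ((2 * of_nat n + 1) * z)"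

lemma theta1_eq_suminf: "theta1 \<tau> z = 2 * suminf (theta_summand \<tau> z)"
  by (simp add: theta1_def theta_summand_def[abs_def])

text \<open>Completing the square: a Gaussian dominates any exponential, uniformly up to a constant.\<close>
lemma gaussian_exponent_bound:
  fixes a b k :: real assumes "a > 0"
  shows "- a * k^2 + b * \<bar>k\<bar> \<le> (b+1)^2 / (4*a) - \<bar>k\<bar>"
proof -
  have "0 \<le> (2*a*\<bar>k\<bar> - (b+1))^2" by simp
  hence "0 \<le> 4*a*a*k^2 - 4*a*(b+1)*\<bar>k\<bar> + (b+1)^2"
    by (simp add: power2_eq_square algebra_simps abs_mult_self_eq)
  hence "4*a*(- a * k^2 + b * \<bar>k\<bar> + \<bar>k\<bar>) \<le> (b+1)^2"
    by (simp add: algebra_simps)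
  thus ?thesis using assms by (simp add: field_simps)
qed

lemma norm_theta_bterm_le:
  assumes "Im \<tau> > 0"
  shows "norm (theta_bterm \<tau> z k) \<le> exp ((\<bar>Im z\<bar>+1)^2 / (pi * Im \<tau>)) * exp (-1) ^ nat \<bar>k\<bar>"
proof -
  let ?a = "pi * Im \<tau> / 4" and ?b = "\<bar>Im z\<bar>"
  have a: "?a > 0" using assms by simp
  have re_gauss: "Re (\<i> * of_real pi * \<tau> * (of_int k)^2 / 4) = - ?a * (real_of_int k)^2"
    by (simp add: power2_eq_square)
  have re_lin: "Re (\<i> * of_int k * z) \<le> ?b * \<bar>real_of_int k\<bar>"
  proof -
    have "Re (\<i> * of_int k * z) = - (real_of_int k * Im z)" by simp
    also have "\<dots> \<le> \<bar>real_of_int k * Im z\<bar>" by linarith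
    finally show ?thesis by (simp add: abs_mult mult.commute)
  qed
  have "norm (theta_bterm \<tau> z k) \<le> 1 * exp (- ?a * (real_of_int k)^2) * exp (?b * \<bar>real_of_int k\<bar>)"
    unfolding theta_bterm_def norm_mult norm_exp_eq_Re re_gauss
    by (intro mult_mono) (use re_lin in \<open>auto simp: chi4_def\<close>)
  also have "\<dots> = exp (- ?a * (real_of_int k)^2 + ?b * \<bar>real_of_int k\<bar>)"
    by (simp add: mult_exp_exp algebra_simps)
  also have "\<dots> \<le> exp ((?b+1)^2 / (4*?a) - \<bar>real_of_int k\<bar>)"
    using gaussian_exponent_bound[OF a, where b = ?b and k = "real_of_int k"] by simp
  also have "\<dots> = exp ((?b+1)^2 / (pi * Im \<tau>)) * exp (-1) ^ nat \<bar>k\<bar>"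
  proof -
    have "exp (- \<bar>real_of_int k\<bar>) = exp (of_nat (nat \<bar>k\<bar>) * (-1))" by simp
    also have "\<dots> = exp (-1) ^ nat \<bar>k\<bar>" by (rule exp_of_nat_mult)
    finally show ?thesis by (simp add: exp_diff exp_minus field_simps)
  qed
  finally show ?thesis .
qed

lemma summable_on_int_abs:
  fixes f :: "nat \<Rightarrow> real"
  assumes "summable (\<lambda>n. norm (f n))"
  shows "(\<lambda>k::int. f (nat \<bar>k\<bar>)) summable_on UNIV"
proof -
  have nonneg: "(\<lambda>k::int. f (nat \<bar>k\<bar>)) summable_on range int"
    by (subst summable_on_reindex) (use assms in \<open>auto simp: o_def intro: norm_summable_imp_summable_on\<close>)
  have neg: "(\<lambda>k::int. f (nat \<bar>k\<bar>)) summable_on range (\<lambda>n. - int n - 1)"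
  proof (subst summable_on_reindex)
    show "inj_on (\<lambda>n. - int n - 1) UNIV" by (auto simp: inj_on_def)
    have "(\<lambda>n. f (Suc n)) summable_on UNIV"
      using assms summable_Suc_iff[of "\<lambda>n. norm (f n)"] by (blast intro: norm_summable_imp_summable_on)
    moreover have "nat \<bar>- int n - 1\<bar> = Suc n" for n by simp
    ultimately show "((\<lambda>k::int. f (nat \<bar>k\<bar>)) \<circ> (\<lambda>n. - int n - 1)) summable_on UNIV"
      by (simp add: o_def)
  qed
  have "k \<in> range int \<union> range (\<lambda>n. - int n - 1)" for k :: int
  proof (cases "k \<ge> 0")
    case True thus ?thesis by (auto intro: image_eqI[of _ _ "nat k"])
  next
    case False thus ?thesis by (auto intro!: image_eqI[of _ _ "nat (-k-1)"])
  qed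
  hence "range int \<union> range (\<lambda>n. - int n - 1) = (UNIV :: int set)" by auto
  moreover have "(\<lambda>k::int. f (nat \<bar>k\<bar>)) summable_on (range int \<union> range (\<lambda>n. - int n - 1))"
    by (rule summable_on_Un_disjoint[OF nonneg neg]) auto
  ultimately show ?thesis by simp
qed

lemma theta_bterm_abs_summable:
  assumes "Im \<tau> > 0"
  shows "(\<lambda>k. norm (theta_bterm \<tau> z k)) summable_on UNIV"
proof -
  define C where "C = exp ((\<bar>Im z\<bar>+1)^2 / (pi * Im \<tau>))"
  have "summable (\<lambda>n. norm (exp (-1::real) ^ n))" by (simp add: summable_geometric)
  hence "(\<lambda>k::int. exp (-1::real) ^ nat \<bar>k\<bar>) summable_on UNIV"
    by (rule summable_on_int_abs)
  hence "(\<lambda>k. C * exp (-1) ^ nat \<bar>k\<bar>) summable_on UNIV"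
    by (rule summable_on_cmult_right)
  moreover have norm_eq: "norm (C * exp (-1) ^ nat \<bar>k\<bar>) = C * exp (-1) ^ nat \<bar>k\<bar>" for k
    by (simp add: C_def)
  ultimately have "(\<lambda>k. norm (C * exp (-1) ^ nat \<bar>k\<bar>)) summable_on UNIV"
    by simp
  moreover have "norm (theta_bterm \<tau> z k) \<le> norm (C * exp (-1) ^ nat \<bar>k\<bar>)" for k
    unfolding norm_eq using norm_theta_bterm_le[OF assms, of z k] by (simp add: C_def)
  ultimately show ?thesis
    using Infinite_Sum.abs_summable_on_comparison_test by fastforce
qed

lemma chi4_pos: "chi4 (2 * int n + 1) = (-1) ^ n"
proof (cases "even n")
  case True then obtain m where "n = 2*m" by auto
  thus ?thesis by (simp add: chi4_def)
next
  case False then obtain m where "n = 2*m+1" using oddE by blast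
  thus ?thesis by (simp add: chi4_def)
qed

lemma chi4_neg: "chi4 (- 2 * int n - 1) = - ((-1) ^ n)"
proof (cases "even n")
  case True then obtain m where m: "n = 2*m" by auto
  have "(- 2 * int n - 1) mod 4 = 3" unfolding m by presburger
  thus ?thesis using m by (simp add: chi4_def)
next
  case False then obtain m where m: "n = 2*m+1" using oddE by blast
  have "(- 2 * int n - 1) mod 4 = 1" unfolding m by presburger
  thus ?thesis using m by (simp add: chi4_def)
qed

lemma theta_bterm_pair:
  "theta_bterm \<tau> z (2 * int n + 1) + theta_bterm \<tau> z (- 2 * int n - 1) = 2 * \<i> * theta_summand \<tau> z n"
proof -
  define E where "E = exp (\<i> * of_real pi * \<tau> * (of_nat n + 1/2)^2)"
  define w where "w = (2 * of_nat n + 1) * z"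
  have q1: "\<i> * of_real pi * \<tau> * (of_int (2 * int n + 1))^2 / 4 = \<i> * of_real pi * \<tau> * (of_nat n + 1/2)^2"
    by (simp add: power2_eq_square field_simps)
  have q2: "\<i> * of_real pi * \<tau> * (of_int (- 2 * int n - 1))^2 / 4 = \<i> * of_real pi * \<tau> * (of_nat n + 1/2)^2"
    by (simp add: power2_eq_square field_simps)
  have e1: "\<i> * of_int (2 * int n + 1) * z = \<i> * w" by (simp add: w_def)
  have e2: "\<i> * of_int (- 2 * int n - 1) * z = - (\<i> * w)" by (simp add: w_def algebra_simps)
  have "theta_bterm \<tau> z (2 * int n + 1) + theta_bterm \<tau> z (- 2 * int n - 1)
      = (-1)^n * E * (exp (\<i> * w) - exp (- (\<i> * w)))"
    unfolding theta_bterm_def chi4_pos chi4_neg q1 q2 e1 e2 E_def by (simp add: algebra_simps)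
  also have "exp (\<i> * w) - exp (- (\<i> * w)) = 2 * \<i> * sin w"
    by (simp add: sin_exp_eq)
  finally show ?thesis by (simp add: theta_summand_def E_def w_def algebra_simps)
qed

text \<open>Grouping the bilateral series by the pairs above (even indices contribute nothing)
  recovers the series defining theta1.\<close>
lemma theta_summand_sums_bilateral:
  assumes "Im \<tau> > 0"
  shows "(\<lambda>n. 2 * \<i> * theta_summand \<tau> z n) sums infsum (theta_bterm \<tau> z) UNIV"
proof -
  define hP where "hP n = 2 * int n + 1" for n :: nat
  define hN where "hN n = - 2 * int n - 1" for n :: nat
  define SP where "SP = infsum (theta_bterm \<tau> z) (range hP)"
  define SN where "SN = infsum (theta_bterm \<tau> z) (range hN)"
  have summable: "theta_bterm \<tau> z summable_on UNIV"
    using theta_bterm_abs_summable[OF assms] abs_summable_summable by blast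
  have hsP: "(theta_bterm \<tau> z has_sum SP) (range hP)"
    unfolding SP_def using summable_on_subset_banach[OF summable] by (simp add: has_sum_infsum)
  have hsN: "(theta_bterm \<tau> z has_sum SN) (range hN)"
    unfolding SN_def using summable_on_subset_banach[OF summable] by (simp add: has_sum_infsum)
  have "((theta_bterm \<tau> z \<circ> hP) has_sum SP) UNIV"
    using hsP has_sum_reindex[of hP] by (auto simp: inj_on_def hP_def)
  moreover have "((theta_bterm \<tau> z \<circ> hN) has_sum SN) UNIV"
    using hsN has_sum_reindex[of hN] by (auto simp: inj_on_def hN_def)
  ultimately have "((\<lambda>n. 2 * \<i> * theta_summand \<tau> z n) has_sum (SP + SN)) UNIV"
    using has_sum_add theta_bterm_pair by (fastforce simp: hP_def hN_def)
  hence sums: "(\<lambda>n. 2 * \<i> * theta_summand \<tau> z n) sums (SP + SN)"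
    by (rule has_sum_imp_sums)
  have odd_only: "theta_bterm \<tau> z k = 0" if "k \<notin> range hP \<union> range hN" for k
  proof -
    have "even k"
    proof (rule ccontr)
      assume "odd k"
      then obtain m where m: "k = 2*m+1" using oddE by blast
      show False
      proof (cases "m \<ge> 0")
        case True
        hence "k = hP (nat m)" by (simp add: hP_def m)
        thus False using that by auto
      next
        case False
        hence "k = hN (nat (-m-1))" by (simp add: hN_def m)
        thus False using that by auto
      qed
    qed
    thus ?thesis by (simp add: theta_bterm_def chi4_def)
  qed
  have "(theta_bterm \<tau> z has_sum (SP + SN)) (range hP \<union> range hN)"
    by (rule has_sum_Un_disjoint[OF hsP hsN]) (auto simp: hP_def hN_def)
  hence "(theta_bterm \<tau> z has_sum (SP + SN)) UNIV"
    by (subst (asm) has_sum_cong_neutral[where g="theta_bterm \<tau> z" and T=UNIV]) (auto simp: odd_only)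
  with sums show ?thesis by (simp add: infsumI)
qed

lemma theta_summand_summable:
  assumes "Im \<tau> > 0"
  shows "summable (theta_summand \<tau> z)"
  using summable_mult[OF sums_summable[OF theta_summand_sums_bilateral[OF assms]], of "1 / (2 * \<i>)"]
  by simp

lemma theta1_bilateral:
  assumes "Im \<tau> > 0"
  shows "theta1 \<tau> z = - \<i> * infsum (theta_bterm \<tau> z) UNIV"
proof -
  have "theta_summand \<tau> z sums (infsum (theta_bterm \<tau> z) UNIV / (2 * \<i>))"
    using sums_mult[OF theta_summand_sums_bilateral[OF assms], of "1 / (2 * \<i>)"] by simp
  thus ?thesis by (simp add: theta1_eq_suminf sums_iff)
qed

section \<open>Elementary symmetries of theta_1\<close>

lemma theta1_odd:
  assumes "Im \<tau> > 0"
  shows "theta1 \<tau> (- z) = - theta1 \<tau> z"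
proof -
  have "theta_summand \<tau> (- z) = (\<lambda>n. - theta_summand \<tau> z n)"
    by (simp add: fun_eq_iff theta_summand_def sin_minus)
  thus ?thesis
    by (simp add: theta1_eq_suminf suminf_minus[OF theta_summand_summable[OF assms]])
qed

lemma sin_odd_multiple_shift_pi:
  "sin ((2 * of_nat n + 1) * (z + complex_of_real pi)) = - sin ((2 * of_nat n + 1) * z)"
proof -
  have "(2 * of_nat n + 1) * (z + complex_of_real pi) = (2 * of_nat n + 1) * z + complex_of_real (real (2*n+1) * pi)"
    by (simp add: algebra_simps)
  moreover have "sin (complex_of_real (real (2*n+1) * pi)) = 0"
    by (simp only: sin_of_real sin_npi) simp
  moreover have "cos (complex_of_real (real (2*n+1) * pi)) = -1"
    by (simp only: cos_of_real cos_npi) simp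
  ultimately show ?thesis by (simp add: sin_add)
qed

lemma theta1_shift_pi:
  assumes "Im \<tau> > 0"
  shows "theta1 \<tau> (z + complex_of_real pi) = - theta1 \<tau> z"
proof -
  have "theta_summand \<tau> (z + complex_of_real pi) = (\<lambda>n. - theta_summand \<tau> z n)"
    by (simp add: fun_eq_iff theta_summand_def sin_odd_multiple_shift_pi)
  thus ?thesis
    by (simp add: theta1_eq_suminf suminf_minus[OF theta_summand_summable[OF assms]])
qed

lemma theta1_reflect_pi:
  assumes "Im \<tau> > 0"
  shows "theta1 \<tau> (complex_of_real pi - z) = theta1 \<tau> z"
  using theta1_odd[OF assms, of "z - complex_of_real pi"]
        theta1_shift_pi[OF assms, of "z - complex_of_real pi"] by simp

lemma abs_summable_product:
  fixes f :: "'a \<Rightarrow> complex" and g :: "'b \<Rightarrow> complex"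
  assumes f: "(\<lambda>x. norm (f x)) summable_on UNIV" and g: "(\<lambda>x. norm (g x)) summable_on UNIV"
  shows "(\<lambda>p. norm (f (fst p) * g (snd p))) summable_on UNIV"
    and "infsum (\<lambda>p. f (fst p) * g (snd p)) UNIV = infsum f UNIV * infsum g UNIV"
proof -
  have "(\<lambda>p. norm (f (fst p) * g (snd p))) summable_on Sigma UNIV (\<lambda>_. UNIV)"
  proof (subst Infinite_Sum.abs_summable_on_Sigma_iff, intro conjI ballI)
    fix x
    show "(\<lambda>y. norm (f (fst (x, y)) * g (snd (x, y)))) summable_on UNIV"
      using summable_on_cmult_right[OF g, of "norm (f x)"] by (simp add: norm_mult)
  next
    have "(\<lambda>x. norm (infsum (\<lambda>y. norm (f (fst (x, y)) * g (snd (x, y)))) UNIV))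
          = (\<lambda>x. norm (f x) * infsum (\<lambda>y. norm (g y)) UNIV)"
      by (simp add: norm_mult infsum_cmult_right' infsum_nonneg)
    thus "(\<lambda>x. norm (infsum (\<lambda>y. norm (f (fst (x, y)) * g (snd (x, y)))) UNIV)) summable_on UNIV"
      using summable_on_cmult_left[OF f] by simp
  qed
  thus abs: "(\<lambda>p. norm (f (fst p) * g (snd p))) summable_on UNIV" by simp
  have summable: "(\<lambda>p. f (fst p) * g (snd p)) summable_on Sigma UNIV (\<lambda>_. UNIV)"
    using abs abs_summable_summable by auto
  have "infsum (\<lambda>p. f (fst p) * g (snd p)) (Sigma UNIV (\<lambda>_. UNIV))
        = infsum (\<lambda>x. infsum (\<lambda>y. f (fst (x, y)) * g (snd (x, y))) UNIV) UNIV"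
    using infsum_Sigma_banach[OF summable] by simp
  also have "\<dots> = infsum (\<lambda>x. f x * infsum g UNIV) UNIV"
    by (simp add: infsum_cmult_right')
  also have "\<dots> = infsum f UNIV * infsum g UNIV"
    by (simp add: infsum_cmult_left')
  finally show "infsum (\<lambda>p. f (fst p) * g (snd p)) UNIV = infsum f UNIV * infsum g UNIV" by simp
qed

section \<open>The three-term addition formula at eta = pi/3\<close>

text \<open>Each triple product of bilateral series is a single sum over Z^3, whose term depends
  on the shift e only through the factor exp(i e (k2+k3-k1)).\<close>
definition triple_bterm ::
    "complex \<Rightarrow> complex \<Rightarrow> complex \<Rightarrow> complex \<Rightarrow> (int \<times> int) \<times> int \<Rightarrow> complex" where
  "triple_bterm \<tau> a b e k = (case k of ((k1, k2), k3) \<Rightarrow>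
     theta_bterm \<tau> (a + b - e) k1 * theta_bterm \<tau> (a + e) k2 * theta_bterm \<tau> (b + e) k3)"

lemma triple_bterm_expand:
  "triple_bterm \<tau> a b e ((k1, k2), k3) =
   chi4 k1 * chi4 k2 * chi4 k3 * exp (\<i> * of_real pi * \<tau> * of_int (k1^2 + k2^2 + k3^2) / 4)
     * exp (\<i> * (of_int (k1 + k2) * a + of_int (k1 + k3) * b)) * exp (\<i> * e * of_int (k2 + k3 - k1))"
proof -
  have "triple_bterm \<tau> a b e ((k1, k2), k3) =
        chi4 k1 * chi4 k2 * chi4 k3 * exp (\<i> * of_real pi * \<tau> * (of_int k1)^2 / 4 + \<i> * of_int k1 * (a + b - e)
          + (\<i> * of_real pi * \<tau> * (of_int k2)^2 / 4 + \<i> * of_int k2 * (a + e))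
          + (\<i> * of_real pi * \<tau> * (of_int k3)^2 / 4 + \<i> * of_int k3 * (b + e)))"
    unfolding triple_bterm_def theta_bterm_def exp_add by (simp add: mult_ac)
  also have "\<i> * of_real pi * \<tau> * (of_int k1)^2 / 4 + \<i> * of_int k1 * (a + b - e)
          + (\<i> * of_real pi * \<tau> * (of_int k2)^2 / 4 + \<i> * of_int k2 * (a + e))
          + (\<i> * of_real pi * \<tau> * (of_int k3)^2 / 4 + \<i> * of_int k3 * (b + e))
        = \<i> * of_real pi * \<tau> * of_int (k1^2 + k2^2 + k3^2) / 4
          + \<i> * (of_int (k1 + k2) * a + of_int (k1 + k3) * b) + \<i> * e * of_int (k2 + k3 - k1)"
    by (simp add: algebra_simps add_divide_distrib)
  finally show ?thesis unfolding exp_add by (simp add: mult_ac)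
qed

lemma triple_bterm_has_sum:
  assumes "Im \<tau> > 0"
  shows "(triple_bterm \<tau> a b e has_sum
           (infsum (theta_bterm \<tau> (a + b - e)) UNIV * infsum (theta_bterm \<tau> (a + e)) UNIV
            * infsum (theta_bterm \<tau> (b + e)) UNIV)) UNIV"
proof -
  note abs = theta_bterm_abs_summable[OF assms]
  note prod12 = abs_summable_product[OF abs[of "a + b - e"] abs[of "a + e"]]
  note prod123 = abs_summable_product[OF prod12(1) abs[of "b + e"]]
  have eq: "triple_bterm \<tau> a b e = (\<lambda>q. theta_bterm \<tau> (a + b - e) (fst (fst q))
              * theta_bterm \<tau> (a + e) (snd (fst q)) * theta_bterm \<tau> (b + e) (snd q))"
    by (simp add: triple_bterm_def fun_eq_iff split: prod.split)
  have "triple_bterm \<tau> a b e summable_on UNIV"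
    using abs_summable_summable prod123(1) unfolding eq by (simp add: mult.assoc)
  moreover have "infsum (triple_bterm \<tau> a b e) UNIV
      = infsum (theta_bterm \<tau> (a + b - e)) UNIV * infsum (theta_bterm \<tau> (a + e)) UNIV
        * infsum (theta_bterm \<tau> (b + e)) UNIV"
    using prod123(2) unfolding eq prod12(2) by simp
  ultimately show ?thesis by (metis has_sum_infsum)
qed

text \<open>The weight 1 - 2 cos(eta s) of the combined sum; it vanishes when s is odd and prime to 3.\<close>
definition eta_weight :: "int \<Rightarrow> complex" where
  "eta_weight s = 1 - exp (\<i> * eta * of_int s) - exp (- (\<i> * eta * of_int s))"

lemma eta_weight_neg: "eta_weight (- s) = eta_weight s"
  by (simp add: eta_weight_def)

lemma cos_third_pi_multiple:
  assumes "odd s" "\<not> 3 dvd s"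
  shows "cos (pi / 3 * real_of_int s) = 1/2"
proof -
  obtain m r where sr: "s = 6*m + r" and r: "r = 1 \<or> r = 5"
  proof -
    have "s mod 6 = 1 \<or> s mod 6 = 5" using assms by presburger
    thus ?thesis using that[of "s div 6" "s mod 6"] by auto
  qed
  have period: "pi / 3 * real_of_int s = pi / 3 * real_of_int r + (2 * pi) * real_of_int m"
    by (simp add: sr algebra_simps)
  have "cos (pi / 3 * real_of_int s) = cos (pi / 3 * real_of_int r)"
    unfolding period cos_add by simp
  also have "\<dots> = 1/2"
  proof (cases "r = 1")
    case True thus ?thesis by (simp add: cos_60)
  next
    case False
    hence five: "pi / 3 * real_of_int r = - (pi/3) + 2 * pi" using r by simp
    show ?thesis unfolding five cos_add by (simp add: cos_60)
  qed
  finally show ?thesis .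
qed

lemma eta_weight_zero:
  assumes "odd s" "\<not> 3 dvd s"
  shows "eta_weight s = 0"
proof -
  have "exp (\<i> * eta * of_int s) + exp (- (\<i> * eta * of_int s)) = 2 * cos (eta * of_int s)"
    by (simp add: cos_exp_eq mult.assoc)
  also have "eta * of_int s = complex_of_real (pi / 3 * real_of_int s)"
    by (simp add: eta_def)
  also have "cos \<dots> = complex_of_real (1/2)"
    by (simp only: cos_of_real cos_third_pi_multiple[OF assms])
  finally show ?thesis unfolding eta_weight_def by (simp add: algebra_simps)
qed

lemma chi4_triple:
  assumes "odd k1" "odd k2" "odd k3"
  shows "chi4 k1 * chi4 k2 * chi4 k3 = (if (k1+k2+k3) mod 4 = 3 then 1 else -1)"
proof -
  have residues: "k mod 4 = 1 \<or> k mod 4 = 3" if "odd k" for k :: int using that by presburger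
  show ?thesis
    using residues[OF assms(1)] residues[OF assms(2)] residues[OF assms(3)] assms
    unfolding chi4_def by (elim disjE) (simp_all, presburger+)
qed

definition combined_bterm :: "complex \<Rightarrow> complex \<Rightarrow> complex \<Rightarrow> (int \<times> int) \<times> int \<Rightarrow> complex" where
  "combined_bterm \<tau> a b k = (case k of ((k1, k2), k3) \<Rightarrow>
     chi4 k1 * chi4 k2 * chi4 k3 * exp (\<i> * of_real pi * \<tau> * of_int (k1^2 + k2^2 + k3^2) / 4)
       * exp (\<i> * (of_int (k1 + k2) * a + of_int (k1 + k3) * b)) * eta_weight (k2 + k3 - k1))"

lemma combined_bterm_eq:
  "combined_bterm \<tau> a b k = triple_bterm \<tau> a b 0 k - triple_bterm \<tau> a b eta k - triple_bterm \<tau> a b (- eta) k"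
proof -
  obtain k1 k2 k3 where k: "k = ((k1, k2), k3)" by (metis prod.collapse)
  have "exp (\<i> * (- eta) * of_int (k2 + k3 - k1)) = exp (- (\<i> * eta * of_int (k2 + k3 - k1)))"
    by simp
  thus ?thesis
    unfolding k combined_bterm_def triple_bterm_expand eta_weight_def
    by (simp only: prod.case right_diff_distrib mult_1_right exp_zero mult_zero_right mult_zero_left)
qed

text \<open>The involution of Z^3 that moves (k1,k2,k3) by (-2t, 2t, 2t) when k1-k2-k3 = 3t.  It preserves
  k1^2+k2^2+k3^2, k1+k2, k1+k3, and negates k2+k3-k1.\<close>
definition eta_involution :: "(int \<times> int) \<times> int \<Rightarrow> (int \<times> int) \<times> int" where
  "eta_involution k = (case k of ((k1, k2), k3) \<Rightarrow>
     if 3 dvd (k1 - k2 - k3) then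
       ((k1 - 2 * ((k1 - k2 - k3) div 3), k2 + 2 * ((k1 - k2 - k3) div 3)), k3 + 2 * ((k1 - k2 - k3) div 3))
     else k)"

lemma eta_involution_involutive: "eta_involution (eta_involution k) = k"
proof -
  obtain k1 k2 k3 where k: "k = ((k1, k2), k3)" by (metis prod.collapse)
  show ?thesis
  proof (cases "3 dvd (k1 - k2 - k3)")
    case True
    then obtain t where t: "k1 - k2 - k3 = 3 * t" by blast
    have "(k1 - k2 - k3) div 3 = t" using t by simp
    moreover have "3 dvd (k1 - 2*t - (k2 + 2*t) - (k3 + 2*t))" using t by presburger
    moreover have "(k1 - 2*t - (k2 + 2*t) - (k3 + 2*t)) div 3 = -t" using t by presburger
    ultimately show ?thesis unfolding k eta_involution_def using True by simp
  next
    case False thus ?thesis unfolding k eta_involution_def by simp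
  qed
qed

text \<open>The combined term vanishes unless all k_i are odd and 3 divides k1 - k2 - k3: otherwise a
  character value is zero, or s = k2 + k3 - k1 is odd and prime to 3 so that the weight is zero.\<close>
lemma combined_bterm_vanishes:
  assumes "\<not> (odd k1 \<and> odd k2 \<and> odd k3 \<and> 3 dvd (k1 - k2 - k3))"
  shows "combined_bterm \<tau> a b ((k1, k2), k3) = 0"
proof (cases "odd k1 \<and> odd k2 \<and> odd k3")
  case True
  hence "odd (k2 + k3 - k1)" "\<not> 3 dvd (k2 + k3 - k1)" using assms by presburger+
  thus ?thesis unfolding combined_bterm_def using eta_weight_zero by simp
next
  case False thus ?thesis unfolding combined_bterm_def by (auto simp: chi4_def)
qed

text \<open>The combined term is odd under the involution.  Where it can be nonzero, k1 - k2 - k3 = 3t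
  with t odd, so the character product changes sign while the other factors are invariant.\<close>
lemma combined_bterm_involution:
  "combined_bterm \<tau> a b (eta_involution k) = - combined_bterm \<tau> a b k"
proof -
  obtain k1 k2 k3 where k: "k = ((k1, k2), k3)" by (metis prod.collapse)
  show ?thesis
  proof (cases "3 dvd (k1 - k2 - k3)")
    case False
    hence "eta_involution k = k" unfolding k eta_involution_def by simp
    moreover have "combined_bterm \<tau> a b k = 0"
      unfolding k using False by (intro combined_bterm_vanishes) blast
    ultimately show ?thesis by simp
  next
    case True
    then obtain t where t: "k1 - k2 - k3 = 3 * t" by blast
    have inv: "eta_involution k = ((k1 - 2*t, k2 + 2*t), k3 + 2*t)"
      unfolding k eta_involution_def using t by simp
    show ?thesis
    proof (cases "odd k1 \<and> odd k2 \<and> odd k3")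
      case False
      hence "\<not> (odd (k1 - 2*t) \<and> odd (k2 + 2*t) \<and> odd (k3 + 2*t))" by presburger
      hence "combined_bterm \<tau> a b (eta_involution k) = 0"
        unfolding inv by (intro combined_bterm_vanishes) blast
      moreover have "combined_bterm \<tau> a b k = 0"
        unfolding k using False by (intro combined_bterm_vanishes) blast
      ultimately show ?thesis by simp
    next
      case True
      hence odd: "odd (k1 - 2*t)" "odd (k2 + 2*t)" "odd (k3 + 2*t)" by presburger+
      have "odd t" using True t by presburger
      hence "((k1 - 2*t) + (k2 + 2*t) + (k3 + 2*t)) mod 4 = 3 \<longleftrightarrow> \<not> ((k1+k2+k3) mod 4 = 3)"
        using True by presburger
      hence chars: "chi4 (k1 - 2*t) * chi4 (k2 + 2*t) * chi4 (k3 + 2*t) = - (chi4 k1 * chi4 k2 * chi4 k3)"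
        unfolding chi4_triple[OF odd] using chi4_triple[of k1 k2 k3] True by simp
      have k1_eq: "k1 = k2 + k3 + 3*t" using t by simp
      have squares: "(k1 - 2*t)^2 + (k2 + 2*t)^2 + (k3 + 2*t)^2 = k1^2 + k2^2 + k3^2"
        unfolding k1_eq by (simp add: power2_eq_square algebra_simps)
      have "k2 + 2*t + (k3 + 2*t) - (k1 - 2*t) = - (k2 + k3 - k1)" using t by simp
      hence weight: "eta_weight (k2 + 2*t + (k3 + 2*t) - (k1 - 2*t)) = eta_weight (k2 + k3 - k1)"
        by (simp only: eta_weight_neg)
      show ?thesis unfolding inv unfolding k combined_bterm_def using chars squares weight
        by (simp del: of_int_add of_int_power)
    qed
  qed
qed

text \<open>Reindexing by the involution shows that the combined sum equals its own negative.\<close>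
lemma combined_bterm_infsum: "infsum (combined_bterm \<tau> a b) UNIV = 0"
proof -
  have "bij eta_involution" by (rule involuntory_imp_bij) (rule eta_involution_involutive)
  hence "infsum (combined_bterm \<tau> a b) UNIV = infsum (\<lambda>k. combined_bterm \<tau> a b (eta_involution k)) UNIV"
    using infsum_reindex_bij_betw[of eta_involution UNIV UNIV "combined_bterm \<tau> a b"] by simp
  also have "\<dots> = - infsum (combined_bterm \<tau> a b) UNIV"
    by (simp add: combined_bterm_involution infsum_uminus)
  finally show ?thesis by simp
qed

text \<open>The addition formula (KEY): the three triple products differ by the vanishing combined sum.\<close>
theorem theta1_addition_eta:
  assumes "Im \<tau> > 0"
  shows "theta1 \<tau> (a + b) * theta1 \<tau> a * theta1 \<tau> b =
         theta1 \<tau> (a + b - eta) * theta1 \<tau> (a + eta) * theta1 \<tau> (b + eta)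
       + theta1 \<tau> (a + b + eta) * theta1 \<tau> (a - eta) * theta1 \<tau> (b - eta)"
proof -
  define S where "S z = infsum (theta_bterm \<tau> z) UNIV" for z
  define P where "P e = S (a + b - e) * S (a + e) * S (b + e)" for e
  have "(combined_bterm \<tau> a b has_sum (P 0 - P eta - P (- eta))) UNIV"
    unfolding combined_bterm_eq[abs_def] P_def S_def
    using has_sum_add[OF has_sum_add[OF triple_bterm_has_sum[OF assms, of a b 0]
            has_sum_uminusI[OF triple_bterm_has_sum[OF assms, of a b eta]]]
          has_sum_uminusI[OF triple_bterm_has_sum[OF assms, of a b "- eta"]]]
    by simp
  hence "P 0 - P eta - P (- eta) = 0"
    using combined_bterm_infsum[of \<tau> a b] by (metis infsumI)
  moreover have theta_P: "theta1 \<tau> (a + b - e) * theta1 \<tau> (a + e) * theta1 \<tau> (b + e) = \<i> * P e" for e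
    unfolding theta1_bilateral[OF assms] P_def S_def by (simp add: algebra_simps power3_eq_cube)
  ultimately show ?thesis
    using theta_P[of 0] theta_P[of eta] theta_P[of "- eta"] by (simp add: algebra_simps)
qed

section \<open>The three-term identity for g\<close>

text \<open>pi is three times eta, so shifts by 2 eta and 3 eta reduce to the symmetries of theta1.\<close>
lemma pi_eq_3_eta: "complex_of_real pi = 3 * eta"
  by (simp add: eta_def)

lemma hfun_shift_eta:
  assumes t: "Im \<tau> > 0"
  shows "hfun \<tau> (x + eta) y
           = theta1 \<tau> (eta - x - y) * theta1 \<tau> (eta - x + y) * (theta1 \<tau> (x + y) * theta1 \<tau> (x - y))"
proof -
  have "theta1 \<tau> (eta + (x + eta) - y) = theta1 \<tau> (eta - x + y)"
    using theta1_reflect_pi[OF t, of "eta - x + y"] by (simp add: pi_eq_3_eta algebra_simps)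
  moreover have "theta1 \<tau> (eta + (x + eta) + y) = theta1 \<tau> (eta - x - y)"
    using theta1_reflect_pi[OF t, of "eta - x - y"] by (simp add: pi_eq_3_eta algebra_simps)
  moreover have "theta1 \<tau> (eta - (x + eta) - y) = - theta1 \<tau> (x + y)"
    using theta1_odd[OF t, of "x + y"] by (simp add: algebra_simps)
  moreover have "theta1 \<tau> (eta - (x + eta) + y) = - theta1 \<tau> (x - y)"
    using theta1_odd[OF t, of "x - y"] by (simp add: algebra_simps)
  ultimately show ?thesis unfolding hfun_def by (simp add: mult_ac)
qed

lemma hfun_shift_2eta:
  assumes t: "Im \<tau> > 0"
  shows "hfun \<tau> (x + 2 * eta) y
           = theta1 \<tau> (x + y) * theta1 \<tau> (x - y) * (theta1 \<tau> (eta + x - y) * theta1 \<tau> (eta + x + y))"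
proof -
  have "theta1 \<tau> (eta + (x + 2 * eta) - y) = - theta1 \<tau> (x - y)"
    using theta1_shift_pi[OF t, of "x - y"] by (simp add: pi_eq_3_eta algebra_simps)
  moreover have "theta1 \<tau> (eta + (x + 2 * eta) + y) = - theta1 \<tau> (x + y)"
    using theta1_shift_pi[OF t, of "x + y"] by (simp add: pi_eq_3_eta algebra_simps)
  moreover have "theta1 \<tau> (eta - (x + 2 * eta) - y) = - theta1 \<tau> (eta + x + y)"
    using theta1_odd[OF t, of "eta + x + y"] by (simp add: algebra_simps)
  moreover have "theta1 \<tau> (eta - (x + 2 * eta) + y) = - theta1 \<tau> (eta + x - y)"
    using theta1_odd[OF t, of "eta + x - y"] by (simp add: algebra_simps)
  ultimately show ?thesis unfolding hfun_def by (simp add: mult_ac)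
qed

lemma theta1_addition_eta_sum_diff:
  assumes t: "Im \<tau> > 0"
  shows "theta1 \<tau> (2 * x) * (theta1 \<tau> (x + y) * theta1 \<tau> (x - y))
       = - theta1 \<tau> (eta - 2 * x) * (theta1 \<tau> (eta + x - y) * theta1 \<tau> (eta + x + y))
         + theta1 \<tau> (2 * x + eta) * (theta1 \<tau> (eta - x - y) * theta1 \<tau> (eta - x + y))"
proof -
  have "theta1 \<tau> (2 * x - eta) = - theta1 \<tau> (eta - 2 * x)"
    using theta1_odd[OF t, of "eta - 2 * x"]by (simp add: algebra_simps)
  moreover have "theta1 \<tau> (x + y - eta) = - theta1 \<tau> (eta - x - y)"
    using theta1_odd[OF t, of "eta - x - y"]by (simp add: algebra_simps)
  moreover have "theta1 \<tau> (x - y - eta) = - theta1 \<tau> (eta - x + y)"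
    using theta1_odd[OF t, of "eta - x + y"]by (simp add: algebra_simps)
  ultimately show ?thesis
    using theta1_addition_eta[OF t, of "x + y" "x - y"] by (simp add: algebra_simps)
qed

text \<open>The identity in the first variable.  Only two of the three nonvanishing conditions are needed:
  they already make all factors of the common denominator nonzero.\<close>
lemma gfun_sum_shift_first:
  assumes t: "Im \<tau> > 0"
    and "hfun \<tau> x y \<noteq> 0" "hfun \<tau> (x + eta) y \<noteq> 0"
  shows "gfun \<tau> x y + gfun \<tau> (x + eta) y + gfun \<tau> (x + 2 * eta) y = 0"
proof -
  define A where "A = theta1 \<tau> (eta + x - y) * theta1 \<tau> (eta + x + y)"
  define B where "B = theta1 \<tau> (eta - x - y) * theta1 \<tau> (eta - x + y)"
  define C where "C = theta1 \<tau> (x + y) * theta1 \<tau> (x - y)"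
  have h0: "hfun \<tau> x y = A * B" by (simp add: hfun_def A_def B_def mult_ac)
  have h1: "hfun \<tau> (x + eta) y = B * C" using hfun_shift_eta[OF t] by (simp add: B_def C_def)
  have h2: "hfun \<tau> (x + 2 * eta) y = C * A" using hfun_shift_2eta[OF t] by (simp add: A_def C_def)
  have nonzero: "A \<noteq> 0" "B \<noteq> 0" "C \<noteq> 0" using assms(2,3) h0 h1 by auto
  have g1: "theta1 \<tau> (2 * (x + eta)) = theta1 \<tau> (eta - 2 * x)"
    using theta1_reflect_pi[OF t, of "eta - 2 * x"] by (simp add: pi_eq_3_eta algebra_simps)
  have g2: "theta1 \<tau> (2 * (x + 2 * eta)) = - theta1 \<tau> (2 * x + eta)"
    using theta1_shift_pi[OF t, of "2 * x + eta"] by (simp add: pi_eq_3_eta algebra_simps)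
  have "gfun \<tau> x y + gfun \<tau> (x + eta) y + gfun \<tau> (x + 2 * eta) y
      = theta1 \<tau> (2 * y) / (A * B * C)
        * (theta1 \<tau> (2 * x) * C + theta1 \<tau> (eta - 2 * x) * A - theta1 \<tau> (2 * x + eta) * B)"
    unfolding gfun_def h0 h1 h2 g1 g2 using nonzero by (simp add: field_simps)
  also have "\<dots> = 0"
    using theta1_addition_eta_sum_diff[OF t, of x y] by (simp add: A_def B_def C_def)
  finally show ?thesis .
qed

text \<open>h and g are symmetric in x and y, which transfers the identity to the second variable.\<close>
lemma hfun_swap: "hfun \<tau> x y = hfun \<tau> y x"
  unfolding hfun_def by (simp add: algebra_simps mult_ac)

lemma gfun_swap: "gfun \<tau> x y = gfun \<tau> y x"
  unfolding gfun_def hfun_swap[of \<tau> x y] by (simp add: mult.commute)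

theorem mainTheorem5:
  fixes \<tau> x y :: complex
  assumes "Im \<tau> > 0"
  shows "(hfun \<tau> x y \<noteq> 0 \<and> hfun \<tau> (x + eta) y \<noteq> 0 \<and> hfun \<tau> (x + 2 * eta) y \<noteq> 0
            \<longrightarrow> gfun \<tau> x y + gfun \<tau> (x + eta) y + gfun \<tau> (x + 2 * eta) y = 0)
       \<and> (hfun \<tau> x y \<noteq> 0 \<and> hfun \<tau> x (y + eta) \<noteq> 0 \<and> hfun \<tau> x (y + 2 * eta) \<noteq> 0
            \<longrightarrow> gfun \<tau> x y + gfun \<tau> x (y + eta) + gfun \<tau> x (y + 2 * eta) = 0)"
proof (intro conjI impI)
  assume "hfun \<tau> x y \<noteq> 0 \<and> hfun \<tau> (x + eta) y \<noteq> 0 \<and> hfun \<tau> (x + 2 * eta) y \<noteq> 0"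
  thus "gfun \<tau> x y + gfun \<tau> (x + eta) y + gfun \<tau> (x + 2 * eta) y = 0"
    by (intro gfun_sum_shift_first[OF assms]) simp_all
next
  assume "hfun \<tau> x y \<noteq> 0 \<and> hfun \<tau> x (y + eta) \<noteq> 0 \<and> hfun \<tau> x (y + 2 * eta) \<noteq> 0"
  hence "hfun \<tau> y x \<noteq> 0" "hfun \<tau> (y + eta) x \<noteq> 0"
    using hfun_swap[of \<tau> x y] hfun_swap[of \<tau> x "y + eta"] by simp_all
  hence "gfun \<tau> y x + gfun \<tau> (y + eta) x + gfun \<tau> (y + 2 * eta) x = 0"
    by (rule gfun_sum_shift_first[OF assms])
  thus "gfun \<tau> x y + gfun \<tau> x (y + eta) + gfun \<tau> x (y + 2 * eta) = 0"
    using gfun_swap[of \<tau> x y] gfun_swap[of \<tau> x "y + eta"] gfun_swap[of \<tau> x "y + 2 * eta"]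
    by simp
qed

end
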